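(* $\dim_{\mathbb C}V_k\le|\mathbf B_k|$, where $|\mathbf B_k|=\frac14(u-1)(w+1)$ if $u$ is odd and $|\mathbf B_k|=\frac14uw-\frac12(v-1-u)$ if $u$ is even.
   Context: $u,v\in\mathbb Z_{\ge2}$ coprime with $u<2v$; $k=-2+u/v<0$, $w=2v-u$, $\mathbb L=2w\mathbb Z$. $\chi^{u,v}_{r,s}(q)=\eta(q)^{-1}\sum_{n\in\mathbb Z}(q^{(2uvn+vr-us)^2/4uv}-q^{(2uvn+vr+us)^2/4uv})$, $\eta$ Dedekind's eta; for $\mu\in\frac1v\mathbb Z$, $\theta'_{\mu+\mathbb L}(q)=-\frac1{2w}\sum_{\lambda\in\mu+\mathbb L}\lambda q^{-\lambda^2/4k}$; for $1\le r\le u-1$, $\mu\in r-1+2\mathbb Z$, $\Gamma^\mu_r=\sum_{s=1}^{v-1}(-1)^{s-1}\frac{\chi^{u,v}_{r,s}}{\eta}[\theta'_{\mu+sk+\mathbb L}-\theta'_{\mu-sk+\mathbb L}]$. $V_k$ is the span of all such $\Gamma^\mu_r$. $\mathbf B_k$ is the set of integer pairs $(\mu;r)$ with $\mu\equiv r-1\pmod2$ and: if $u$ odd, $0\le\mu\le w$, $1\le r\le\frac{u-1}2$; if $u$ even, either $0\le\mu\le w$, $1\le r\le\frac u2-1$, or $0\le\mu\le\frac w2$, $r=\frac u2$. *)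

theory Defs
  imports "HOL-Analysis.Analysis" "HOL-Library.Function_Algebras"
begin

text \<open>Fractional powers of the nome: q^x with q = exp(2 pi i tau), tau in the upper half plane.\<close>
definition qpow :: "complex \<Rightarrow> real \<Rightarrow> complex" where
  "qpow \<tau> x = exp (2 * of_real pi * \<i> * \<tau> * of_real x)"

definition eta :: "complex \<Rightarrow> complex" where
  "eta \<tau> = qpow \<tau> (1/24) * prodinf (\<lambda>n. 1 - qpow \<tau> (real (Suc n)))"

definition kk :: "nat \<Rightarrow> nat \<Rightarrow> real" where
  "kk u v = -2 + real u / real v"

definition ww :: "nat \<Rightarrow> nat \<Rightarrow> int" where
  "ww u v = 2 * int v - int u"

definition chi :: "nat \<Rightarrow> nat \<Rightarrow> int \<Rightarrow> int \<Rightarrow> complex \<Rightarrow> complex" where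
  "chi u v r s \<tau> =
     infsum (\<lambda>n::int.
        qpow \<tau> ((real_of_int (2* int u * int v * n + int v * r - int u * s))^2 / (4*real u*real v))
      - qpow \<tau> ((real_of_int (2* int u * int v * n + int v * r + int u * s))^2 / (4*real u*real v))) UNIV
     / eta \<tau>"

text \<open>theta'_{mu + L}, L = 2wZ, for real mu (used with mu in (1/v)Z).\<close>
definition theta' :: "nat \<Rightarrow> nat \<Rightarrow> real \<Rightarrow> complex \<Rightarrow> complex" where
  "theta' u v \<mu> \<tau> =
     - (1 / (2 * of_int (ww u v))) *
       infsum (\<lambda>n::int. of_real (\<mu> + 2 * real_of_int (ww u v) * real_of_int n)
          * qpow \<tau> (- ((\<mu> + 2 * real_of_int (ww u v) * real_of_int n) ^ 2) / (4 * kk u v))) UNIV"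

definition Gamma :: "nat \<Rightarrow> nat \<Rightarrow> int \<Rightarrow> int \<Rightarrow> complex \<Rightarrow> complex" where
  "Gamma u v \<mu> r \<tau> =
     (if Im \<tau> > 0 then
        (\<Sum>s\<in>{1..int v - 1}. (-1)^(nat (s - 1)) * (chi u v r s \<tau> / eta \<tau>) *
            (theta' u v (real_of_int \<mu> + real_of_int s * kk u v) \<tau>
           - theta' u v (real_of_int \<mu> - real_of_int s * kk u v) \<tau>))
      else 0)"

definition cscale :: "complex \<Rightarrow> (complex \<Rightarrow> complex) \<Rightarrow> (complex \<Rightarrow> complex)" where
  "cscale c f = (\<lambda>x. c * f x)"

definition Vk :: "nat \<Rightarrow> nat \<Rightarrow> (complex \<Rightarrow> complex) set" where
  "Vk u v = module.span cscale
     {Gamma u v \<mu> r | \<mu> r. 1 \<le> r \<and> r \<le> int u - 1 \<and> \<mu> mod 2 = (r - 1) mod 2}"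

definition Bk :: "nat \<Rightarrow> nat \<Rightarrow> (int \<times> int) set" where
  "Bk u v = {(\<mu>, r). \<mu> mod 2 = (r - 1) mod 2 \<and>
     (if odd u then 0 \<le> \<mu> \<and> \<mu> \<le> ww u v \<and> 1 \<le> r \<and> 2 * r \<le> int u - 1
      else (0 \<le> \<mu> \<and> \<mu> \<le> ww u v \<and> 1 \<le> r \<and> 2 * r \<le> int u - 2)
         \<or> (0 \<le> \<mu> \<and> 2 * \<mu> \<le> ww u v \<and> 2 * r = int u))}"

end

theory Submission
  imports Defs
begin

(* Gamma^mu_r depends on mu only modulo 2w and is even in mu, because theta'_{mu+L} is
   2w-periodic and odd in mu; so mu may be taken in [0, w].  The symmetry
   chi_{u-r,v-s} = chi_{r,s} of the characters, together with (v - s) k = -w - s k, gives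
   Gamma^mu_{u-r} = +-Gamma^{w-mu}_r.  This halves the range of r, and for r = u/2 also the
   range of mu, so the Gamma^mu_r with (mu;r) in B_k span V_k.  Counting B_k row by row is
   then a count of integers of prescribed parity in an interval. *)

lemma summable_on_int_geometric:
  fixes z :: real
  assumes "0 \<le> z" "z < 1"
  shows "(\<lambda>m::int. z ^ nat \<bar>m\<bar>) summable_on UNIV"
proof -
  have nat: "(\<lambda>n::nat. z ^ n) summable_on UNIV"
    using assms by (subst summable_on_UNIV_nonneg_real_iff) (auto intro: summable_geometric)
  have pos: "(\<lambda>m::int. z ^ nat \<bar>m\<bar>) summable_on range int"
    by (subst summable_on_reindex) (auto simp: o_def nat)
  have neg: "(\<lambda>m::int. z ^ nat \<bar>m\<bar>) summable_on range (\<lambda>n. - int n)"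
    by (subst summable_on_reindex) (auto simp: o_def nat inj_on_def)
  have "(UNIV :: int set) = range int \<union> range (\<lambda>n. - int n)"
  proof (intro set_eqI iffI)
    fix x :: int
    show "x \<in> range int \<union> range (\<lambda>n. - int n)"
      using range_eqI[of x int "nat x"] range_eqI[of x "\<lambda>n. - int n" "nat (- x)"]
      by (cases "x \<ge> 0") auto
  qed simp
  then show ?thesis
    using summable_on_union[OF pos neg] by simp
qed

lemma summable_on_exp_neg_square:
  fixes \<beta> :: real
  assumes "\<beta> > 0"
  shows "(\<lambda>m::int. exp (- \<beta> * (real_of_int m)\<^sup>2)) summable_on UNIV"
proof (rule summable_on_comparison_test[OF summable_on_int_geometric[of "exp (- \<beta>)"]])
  fix m :: int
  have "\<bar>m\<bar> \<le> m\<^sup>2"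
    using self_le_power[of "\<bar>m\<bar>" 2] by (cases "m = 0") simp_all
  then have "real_of_int \<bar>m\<bar> \<le> (real_of_int m)\<^sup>2"
    by (metis of_int_le_iff of_int_power)
  then have "real (nat \<bar>m\<bar>) * (- \<beta>) \<ge> - \<beta> * (real_of_int m)\<^sup>2"
    using assms by simp
  then show "exp (- \<beta> * (real_of_int m)\<^sup>2) \<le> exp (- \<beta>) ^ nat \<bar>m\<bar>"
    by (simp add: exp_of_nat_mult[symmetric])
qed (use assms in simp_all)

lemma norm_qpow: "norm (qpow \<tau> x) = exp (- 2 * pi * Im \<tau> * x)"
  by (simp add: qpow_def)

lemma summable_on_qpow_square:
  assumes "Im \<tau> > 0" "c > 0" "inj h"
  shows "(\<lambda>n::int. qpow \<tau> ((real_of_int (h n))\<^sup>2 / c)) summable_on UNIV"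
proof (rule abs_summable_summable)
  define \<beta> where "\<beta> = 2 * pi * Im \<tau> / c"
  have "\<beta> > 0"
    using assms by (simp add: \<beta>_def)
  then have "(\<lambda>m::int. exp (- \<beta> * (real_of_int m)\<^sup>2)) summable_on range h"
    by (rule summable_on_subset_banach[OF summable_on_exp_neg_square]) simp
  then have "(\<lambda>n. exp (- \<beta> * (real_of_int (h n))\<^sup>2)) summable_on UNIV"
    by (subst (asm) summable_on_reindex[OF assms(3)]) (simp add: o_def)
  then show "(\<lambda>n. norm (qpow \<tau> ((real_of_int (h n))\<^sup>2 / c))) summable_on UNIV"
    by (simp add: norm_qpow \<beta>_def)
qed

lemma infsum_diff:
  fixes f g :: "'a \<Rightarrow> 'b::{topological_ab_group_add, t2_space}"
  assumes "f summable_on A" "g summable_on A"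
  shows "infsum (\<lambda>x. f x - g x) A = infsum f A - infsum g A"
  using infsum_add[OF assms(1), of "\<lambda>x. - g x"] assms(2)
  by (simp add: summable_on_uminus infsum_uminus)

lemma theta'_uminus: "theta' u v (- x) \<tau> = - theta' u v x \<tau>"
proof -
  have "infsum (\<lambda>n::int. of_real (- x + 2 * real_of_int (ww u v) * real_of_int n)
          * qpow \<tau> (- ((- x + 2 * real_of_int (ww u v) * real_of_int n)\<^sup>2) / (4 * kk u v))) UNIV
      = infsum (\<lambda>n::int. - (of_real (x + 2 * real_of_int (ww u v) * real_of_int n)
          * qpow \<tau> (- ((x + 2 * real_of_int (ww u v) * real_of_int n)\<^sup>2) / (4 * kk u v)))) UNIV"
  proof (rule infsum_reindex_bij_witness[of UNIV uminus uminus])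
    fix n :: int
    have "x + 2 * real_of_int (ww u v) * real_of_int (- n) = - (- x + 2 * real_of_int (ww u v) * real_of_int n)"
      by simp
    then show "- (of_real (x + 2 * real_of_int (ww u v) * real_of_int (- n))
          * qpow \<tau> (- ((x + 2 * real_of_int (ww u v) * real_of_int (- n))\<^sup>2) / (4 * kk u v)))
        = of_real (- x + 2 * real_of_int (ww u v) * real_of_int n)
          * qpow \<tau> (- ((- x + 2 * real_of_int (ww u v) * real_of_int n)\<^sup>2) / (4 * kk u v))"
      by (simp only: power2_minus of_real_minus mult_minus_left minus_minus)
  qed simp_all
  then show ?thesis
    by (simp add: theta'_def infsum_uminus)
qed

lemma theta'_period: "theta' u v (x + 2 * real_of_int (ww u v) * real_of_int j) \<tau> = theta' u v x \<tau>"
proof -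
  have "infsum (\<lambda>n::int. of_real (x + 2 * real_of_int (ww u v) * real_of_int j + 2 * real_of_int (ww u v) * real_of_int n)
          * qpow \<tau> (- ((x + 2 * real_of_int (ww u v) * real_of_int j + 2 * real_of_int (ww u v) * real_of_int n)\<^sup>2) / (4 * kk u v))) UNIV
      = infsum (\<lambda>n::int. of_real (x + 2 * real_of_int (ww u v) * real_of_int n)
          * qpow \<tau> (- ((x + 2 * real_of_int (ww u v) * real_of_int n)\<^sup>2) / (4 * kk u v))) UNIV"
    by (rule infsum_reindex_bij_witness[of UNIV "\<lambda>n. n - j" "\<lambda>n. n + j"]) (simp_all add: algebra_simps)
  then show ?thesis
    by (simp only: theta'_def)
qed

lemma chi_flip:
  assumes "u > 0" "v > 0" "Im \<tau> > 0"
  shows "chi u v (int u - r) (int v - s) \<tau> = chi u v r s \<tau>"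
proof -
  define c where "c = 4 * real u * real v"
  define f where "f n = qpow \<tau> ((real_of_int (2 * int u * int v * n + int v * r - int u * s))\<^sup>2 / c)" for n
  define g where "g n = qpow \<tau> ((real_of_int (2 * int u * int v * n + int v * r + int u * s))\<^sup>2 / c)" for n
  have "c > 0"
    using assms by (simp add: c_def)
  have "inj (\<lambda>n. 2 * int u * int v * n + b)" for b
    using assms by (auto intro: inj_onI)
  then have f: "f summable_on UNIV" and g: "g summable_on UNIV"
    unfolding f_def g_def add_diff_eq[symmetric] add.assoc
    by (rule summable_on_qpow_square[OF assms(3) \<open>c > 0\<close>])+
  have f': "(\<lambda>n. f (- n)) summable_on UNIV"
    using f by (subst summable_on_reindex_bij_witness[of UNIV uminus uminus UNIV f]) simp_all
  have g': "(\<lambda>n. g (- n - 1)) summable_on UNIV"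
    using g by (subst summable_on_reindex_bij_witness[of UNIV "\<lambda>n. - n - 1" "\<lambda>n. - n - 1" UNIV g]) simp_all
  (* n \<mapsto> -n and n \<mapsto> -n - 1 carry the two series of chi_{r,s} to those of chi_{u-r,v-s} *)
  have "infsum (\<lambda>n. f (- n)) UNIV = infsum f UNIV"
    by (rule infsum_reindex_bij_witness[of UNIV uminus uminus]) simp_all
  moreover have "infsum (\<lambda>n. g (- n - 1)) UNIV = infsum g UNIV"
    by (rule infsum_reindex_bij_witness[of UNIV "\<lambda>n. - n - 1" "\<lambda>n. - n - 1"]) simp_all
  ultimately have sum: "infsum (\<lambda>n. f (- n) - g (- n - 1)) UNIV = infsum (\<lambda>n. f n - g n) UNIV"
    by (simp add: infsum_diff f g f' g')
  have "2 * int u * int v * n + int v * (int u - r) - int u * (int v - s)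
      = - (2 * int u * int v * (- n) + int v * r - int u * s)"
   and "2 * int u * int v * n + int v * (int u - r) + int u * (int v - s)
      = - (2 * int u * int v * (- n - 1) + int v * r + int u * s)" for n
    by (simp_all add: algebra_simps)
  then have "chi u v (int u - r) (int v - s) \<tau> = infsum (\<lambda>n. f (- n) - g (- n - 1)) UNIV / eta \<tau>"
    unfolding chi_def f_def g_def c_def by (simp only: of_int_minus power2_minus)
  with sum show ?thesis
    by (simp add: chi_def f_def g_def c_def)
qed

lemma Gamma_period: "Gamma u v (\<mu> + 2 * ww u v * j) r = Gamma u v \<mu> r"
proof -
  have "real_of_int (\<mu> + 2 * ww u v * j) + real_of_int s * kk u v
      = (real_of_int \<mu> + real_of_int s * kk u v) + 2 * real_of_int (ww u v) * real_of_int j"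
   and "real_of_int (\<mu> + 2 * ww u v * j) - real_of_int s * kk u v
      = (real_of_int \<mu> - real_of_int s * kk u v) + 2 * real_of_int (ww u v) * real_of_int j" for s
    by simp_all
  then show ?thesis
    by (intro ext) (simp only: Gamma_def theta'_period)
qed

lemma Gamma_uminus: "Gamma u v (- \<mu>) r = Gamma u v \<mu> r"
proof -
  have "real_of_int (- \<mu>) + real_of_int s * kk u v = - (real_of_int \<mu> - real_of_int s * kk u v)"
   and "real_of_int (- \<mu>) - real_of_int s * kk u v = - (real_of_int \<mu> + real_of_int s * kk u v)" for s
    by simp_all
  moreover have "- a - - b = b - a" for a b :: complex
    by simp
  ultimately show ?thesis
    by (intro ext) (simp only: Gamma_def theta'_uminus)
qed

lemma kk_mult_complement:
  "v > 0 \<Longrightarrow> real_of_int (int v - s) * kk u v = - real_of_int (ww u v) - real_of_int s * kk u v"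
  by (simp add: kk_def ww_def field_simps)

lemma neg_one_power_complement:
  assumes "1 \<le> s" "s \<le> int v - 1"
  shows "(-1::'a::comm_ring_1) ^ nat (int v - s - 1) = (-1) ^ v * (-1) ^ nat (s - 1)"
proof -
  define a b where "a = nat (s - 1)" and "b = nat (int v - s - 1)"
  have "v = a + b + 2"
    using assms by (simp add: a_def b_def)
  then have "(-1::'a) ^ v * (-1) ^ a = (-1) ^ (2 * a) * (-1) ^ b"
    by (simp add: power_add mult_2 mult_ac)
  then show ?thesis
    by (simp add: a_def b_def)
qed

lemma Gamma_flip:
  assumes "u > 0" "v > 0"
  shows "Gamma u v \<mu> (int u - r) = cscale (- ((-1) ^ v)) (Gamma u v (ww u v - \<mu>) r)"
proof (rule ext)
  fix \<tau>
  define \<Theta> where "\<Theta> m s = theta' u v (real_of_int m + real_of_int s * kk u v) \<tau>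
      - theta' u v (real_of_int m - real_of_int s * kk u v) \<tau>" for m s
  have \<Theta>: "\<Theta> \<mu> (int v - s) = - \<Theta> (ww u v - \<mu>) s" for s
  proof -
    have "real_of_int \<mu> + real_of_int (int v - s) * kk u v = - (real_of_int (ww u v - \<mu>) + real_of_int s * kk u v)"
     and "real_of_int \<mu> - real_of_int (int v - s) * kk u v
        = - (real_of_int (ww u v - \<mu>) - real_of_int s * kk u v) + 2 * real_of_int (ww u v) * real_of_int (1::int)"
      using kk_mult_complement[OF assms(2), of s u] by simp_all
    then show ?thesis
      unfolding \<Theta>_def by (simp only: theta'_period theta'_uminus) simp
  qed
  show "Gamma u v \<mu> (int u - r) \<tau> = cscale (- ((-1) ^ v)) (Gamma u v (ww u v - \<mu>) r) \<tau>"
  proof (cases "Im \<tau> > 0")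
    case True
    have "(\<Sum>s\<in>{1..int v - 1}. (-1) ^ nat (s - 1) * (chi u v (int u - r) s \<tau> / eta \<tau>) * \<Theta> \<mu> s)
        = (\<Sum>s\<in>{1..int v - 1}. (-1) ^ nat (int v - s - 1) * (chi u v (int u - r) (int v - s) \<tau> / eta \<tau>)
            * \<Theta> \<mu> (int v - s))"
      by (rule sum.reindex_bij_witness[of _ "\<lambda>s. int v - s" "\<lambda>s. int v - s"]) auto
    also have "\<dots> = - ((-1) ^ v) * (\<Sum>s\<in>{1..int v - 1}. (-1) ^ nat (s - 1) * (chi u v r s \<tau> / eta \<tau>)
        * \<Theta> (ww u v - \<mu>) s)"
      unfolding sum_distrib_left
      by (rule sum.cong) (simp_all add: neg_one_power_complement chi_flip[OF assms True] \<Theta>)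
    finally show ?thesis
      using True by (simp add: Gamma_def cscale_def \<Theta>_def)
  qed (simp add: Gamma_def cscale_def)
qed

interpretation V: vector_space cscale
  by unfold_locales (auto simp: cscale_def fun_eq_iff algebra_simps)

lemma Gamma_fundamental_domain:
  assumes "ww u v > 0"
  obtains m where "0 \<le> m" "m \<le> ww u v" "m mod 2 = \<mu> mod 2" "Gamma u v \<mu> r = Gamma u v m r"
proof -
  define w where "w = ww u v"
  define m where "m = \<mu> mod (2 * w)"
  have m: "0 \<le> m" "m < 2 * w" "m mod 2 = \<mu> mod 2"
    using assms by (simp_all add: m_def w_def mod_mod_cancel)
  have "Gamma u v \<mu> r = Gamma u v (m + 2 * ww u v * (\<mu> div (2 * w))) r"
    by (simp add: m_def w_def)
  also have "\<dots> = Gamma u v m r"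
    by (rule Gamma_period)
  finally have \<mu>m: "Gamma u v \<mu> r = Gamma u v m r" .
  show thesis
  proof (cases "m \<le> w")
    case True
    with m \<mu>m show thesis
      by (intro that) (simp_all add: w_def)
  next
    case False
    have "Gamma u v (2 * w - m) r = Gamma u v (- m + 2 * ww u v * 1) r"
      by (simp add: w_def)
    also have "\<dots> = Gamma u v m r"
      by (simp only: Gamma_period Gamma_uminus)
    finally show thesis
      using m \<mu>m False by (intro that[of "2 * w - m"]) (simp_all add: w_def, presburger)
  qed
qed

lemma Bk_reflect_cases:
  assumes "1 \<le> r" "r \<le> int u - 1" "0 \<le> m" "m \<le> ww u v" "m mod 2 = (r - 1) mod 2"
  shows "(m, r) \<in> Bk u v \<or> (ww u v - m, int u - r) \<in> Bk u v"
  using assms unfolding Bk_def ww_def by auto presburger+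

lemma Gamma_in_span_Bk:
  assumes "0 < u" "u < 2 * v"
    and "1 \<le> r" "r \<le> int u - 1" "\<mu> mod 2 = (r - 1) mod 2"
  shows "Gamma u v \<mu> r \<in> V.span ((\<lambda>(m, r). Gamma u v m r) ` Bk u v)"
proof -
  have "ww u v > 0"
    using assms by (simp add: ww_def)
  then obtain m where m: "0 \<le> m" "m \<le> ww u v" "m mod 2 = (r - 1) mod 2"
    and \<mu>m: "Gamma u v \<mu> r = Gamma u v m r"
    using assms(5) by (metis Gamma_fundamental_domain)
  from Bk_reflect_cases[OF assms(3,4) m] show ?thesis
  proof
    assume "(m, r) \<in> Bk u v"
    then show ?thesis
      unfolding \<mu>m by (intro V.span_base) force
  next
    assume "(ww u v - m, int u - r) \<in> Bk u v"
    then have "Gamma u v (ww u v - m) (int u - r) \<in> V.span ((\<lambda>(m, r). Gamma u v m r) ` Bk u v)"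
      by (intro V.span_base) force
    moreover have "Gamma u v m r = cscale (- ((-1) ^ v)) (Gamma u v (ww u v - m) (int u - r))"
      using Gamma_flip[of u v m "int u - r"] assms by simp
    ultimately show ?thesis
      unfolding \<mu>m by (metis V.span_scale)
  qed
qed

lemma Vk_subset_span_Bk:
  assumes "0 < u" "u < 2 * v"
  shows "Vk u v \<subseteq> V.span ((\<lambda>(m, r). Gamma u v m r) ` Bk u v)"
  unfolding Vk_def using Gamma_in_span_Bk[OF assms]
  by (intro V.span_minimal) auto

lemma card_parity_interval:
  assumes "0 \<le> N"
  shows "int (card {\<mu>::int. 0 \<le> \<mu> \<and> \<mu> \<le> N \<and> \<mu> mod 2 = p mod 2}) = (N - p mod 2) div 2 + 1"
proof -
  have "{\<mu>::int. 0 \<le> \<mu> \<and> \<mu> \<le> N \<and> \<mu> mod 2 = p mod 2} = (\<lambda>i. 2 * i + p mod 2) ` {0..(N - p mod 2) div 2}"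
  proof (intro set_eqI iffI)
    fix x assume "x \<in> {\<mu>. 0 \<le> \<mu> \<and> \<mu> \<le> N \<and> \<mu> mod 2 = p mod 2}"
    then have "x = 2 * (x div 2) + p mod 2" "x div 2 \<in> {0..(N - p mod 2) div 2}"
      by auto presburger+
    then show "x \<in> (\<lambda>i. 2 * i + p mod 2) ` {0..(N - p mod 2) div 2}"
      by blast
  next
    fix x assume "x \<in> (\<lambda>i. 2 * i + p mod 2) ` {0..(N - p mod 2) div 2}"
    then show "x \<in> {\<mu>. 0 \<le> \<mu> \<and> \<mu> \<le> N \<and> \<mu> mod 2 = p mod 2}"
      by auto
  qed
  moreover have "inj_on (\<lambda>i::int. 2 * i + p mod 2) A" for A
    by (rule inj_onI) simp
  moreover have "0 \<le> (N - p mod 2) div 2 + 1"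
    using assms by (simp add: pos_imp_zdiv_nonneg_iff)
  ultimately show ?thesis
    by (simp add: card_image)
qed

lemma card_pairs_by_row:
  assumes "finite R" "\<And>r. r \<in> R \<Longrightarrow> finite (M r)"
  shows "card {(\<mu>, r). r \<in> R \<and> \<mu> \<in> M r} = (\<Sum>r\<in>R. card (M r))"
proof -
  have "{(\<mu>, r). r \<in> R \<and> \<mu> \<in> M r} = prod.swap ` Sigma R M"
    by auto
  then show ?thesis
    using assms by (simp add: card_image)
qed

lemma Bk_rows:
  assumes "u > 0"
  shows "Bk u v = {(\<mu>, r). r \<in> {1..int u div 2} \<and>
     \<mu> \<in> {\<mu>. 0 \<le> \<mu> \<and> \<mu> \<le> (if 2 * r = int u then ww u v div 2 else ww u v) \<and> \<mu> mod 2 = (r - 1) mod 2}}"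
  using assms unfolding Bk_def by auto presburger+

lemma finite_Bk: "finite (Bk u v)"
  by (rule finite_subset[of _ "{0..ww u v} \<times> {0..int u}"]) (auto simp: Bk_def)

lemma card_Bk_rows:
  assumes "0 < u" "u < 2 * v"
  shows "int (card (Bk u v)) =
    (\<Sum>r\<in>{1..int u div 2}. ((if 2 * r = int u then ww u v div 2 else ww u v) - (r - 1) mod 2) div 2 + 1)"
proof -
  define N where "N r = (if 2 * r = int u then ww u v div 2 else ww u v)" for r
  have "0 \<le> N r" for r
    using assms(2) by (simp add: N_def ww_def)
  moreover have "finite {\<mu>::int. 0 \<le> \<mu> \<and> \<mu> \<le> M \<and> P \<mu>}" for M P
    by (rule finite_subset[of _ "{0..M}"]) auto
  ultimately show ?thesis
    unfolding Bk_rows[OF assms(1)] N_def[symmetric]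
    by (subst card_pairs_by_row) (simp_all add: card_parity_interval)
qed

lemma card_Bk_odd:
  assumes "u < 2 * v" "odd u"
  shows "4 * int (card (Bk u v)) = (int u - 1) * (ww u v + 1)"
proof -
  have "\<exists>k. int u = 2 * k + 1 \<and> 0 \<le> k"
    using assms(2) by presburger
  then obtain k where k: "int u = 2 * k + 1" "0 \<le> k"
    by blast
  have "\<exists>c. ww u v + 1 = 2 * c"
    using assms(2) unfolding ww_def by presburger
  then obtain c where c: "ww u v + 1 = 2 * c"
    by blast
  have "(if 2 * r = int u then ww u v div 2 else ww u v) = ww u v" for r
    using k by presburger
  moreover have "(ww u v - (r - 1) mod 2) div 2 + 1 = c" for r
    using c by presburger
  ultimately have row: "((if 2 * r = int u then ww u v div 2 else ww u v) - (r - 1) mod 2) div 2 + 1 = c" for r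
    by simp
  have "int (card (Bk u v)) = (\<Sum>r\<in>{1..k}. c)"
    unfolding card_Bk_rows[OF odd_pos[OF assms(2)] assms(1)] row
    using k by simp
  also have "\<dots> = k * c"
    using k(2) by simp
  finally show ?thesis
    using k c by simp
qed

lemma sum_parity_rows:
  assumes "0 \<le> K" "even w"
  shows "(\<Sum>r\<in>{1..K}. ((w::int) - (r - 1) mod 2) div 2 + 1) = K * (w div 2) + (K + 1) div 2"
  using assms(1)
proof (induction K rule: int_ge_induct)
  case (step K)
  have "{1..K + 1} = insert (K + 1) {1..K}"
    using step.hyps by auto
  moreover have "(w - K mod 2) div 2 + 1 + (K + 1) div 2 = w div 2 + (K + 2) div 2"
    using assms(2) by presburger
  ultimately show ?case
    using step.IH by (simp add: algebra_simps)
qed simp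

lemma card_Bk_even:
  assumes "0 < u" "u < 2 * v" "coprime u v" "even u"
  shows "4 * int (card (Bk u v)) = int u * ww u v - 2 * (int v - 1 - int u)"
proof -
  define m where "m = int u div 2"
  have u: "int u = 2 * m" "1 \<le> m"
    using assms(1,4) unfolding m_def by presburger+
  have "odd v"
    using assms(3,4) coprime_common_divisor[of u v 2] by auto
  have w: "ww u v = 2 * (int v - m)"
    using u by (simp add: ww_def)
  have "{1..m} = insert m {1..m - 1}"
    using u by auto
  then have "int (card (Bk u v)) = ((int v - m) - (m - 1) mod 2) div 2 + 1
      + (\<Sum>r\<in>{1..m - 1}. (ww u v - (r - 1) mod 2) div 2 + 1)"
    using card_Bk_rows[OF assms(1,2)] u w by (simp add: m_def[symmetric])
  also have "\<dots> = ((int v - m) - (m - 1) mod 2) div 2 + 1 + (m - 1) * (int v - m) + m div 2"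
    using sum_parity_rows[of "m - 1" "ww u v"] u w by simp
  finally have card: "int (card (Bk u v)) = ((int v - m) - (m - 1) mod 2) div 2 + 1 + m div 2 + (m - 1) * (int v - m)"
    by simp
  have "2 * (((int v - m) - (m - 1) mod 2) div 2 + 1 + m div 2) = int v + 1"
    using \<open>odd v\<close> by presburger
  then show ?thesis
    unfolding card u w by (simp add: algebra_simps)
qed


lemma real_card_Bk:
  assumes "0 < u" "u < 2 * v" "coprime u v"
  shows "real (card (Bk u v)) =
           (if odd u then (real u - 1) * (real_of_int (ww u v) + 1) / 4
            else real u * real_of_int (ww u v) / 4 - (real v - 1 - real u) / 2)"
proof (cases "odd u")
  case True
  then have "real_of_int (4 * int (card (Bk u v))) = real_of_int ((int u - 1) * (ww u v + 1))"
    using card_Bk_odd[OF assms(2)] by simp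
  with True show ?thesis
    by simp
next
  case False
  then have "real_of_int (4 * int (card (Bk u v))) = real_of_int (int u * ww u v - 2 * (int v - 1 - int u))"
    using card_Bk_even[OF assms] by simp
  with False show ?thesis
    by (simp add: field_simps)
qed

theorem mainTheorem12:
  fixes u v :: nat
  assumes "u \<ge> 2" and "v \<ge> 2" and "coprime u v" and "u < 2 * v"
  shows "(\<exists>S. finite S \<and> Vk u v \<subseteq> module.span cscale S)
       \<and> vector_space.dim cscale (Vk u v) \<le> card (Bk u v)
       \<and> real (card (Bk u v)) =
           (if odd u then (real u - 1) * (real_of_int (ww u v) + 1) / 4
            else real u * real_of_int (ww u v) / 4 - (real v - 1 - real u) / 2)"
proof -
  have "0 < u"
    using assms(1) by simp
  define S where "S = (\<lambda>(\<mu>, r). Gamma u v \<mu> r) ` Bk u v"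
  have "finite S"
    using finite_Bk by (simp add: S_def)
  moreover have span: "Vk u v \<subseteq> V.span S"
    unfolding S_def using \<open>0 < u\<close> assms(4) by (rule Vk_subset_span_Bk)
  moreover have "V.dim (Vk u v) \<le> card (Bk u v)"
    using V.dim_le_card[OF span \<open>finite S\<close>] card_image_le[OF finite_Bk] unfolding S_def
    by (rule order_trans)
  ultimately show ?thesis
    using real_card_Bk[OF \<open>0 < u\<close> assms(4,3)] by blast
qed

end
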